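(* Let $(\mathbf{X},\mathbf{A})\sim \textsf{CSBM}(n,p,q,\boldsymbol{\mu},\sigma^2)$ and suppose that $\|\boldsymbol{\mu}\|=\omega(\sigma\sqrt{\log n})$. Let $\Psi$ be the two-layer MLP attention architecture $$\Psi(\mathbf{X}_i,\mathbf{X}_j)=\boldsymbol{r}^T\,\mathrm{LeakyRelu}\!\left(\mathbf{S}\begin{bmatrix}\tilde{\boldsymbol{w}}^T\mathbf{X}_i\\ \tilde{\boldsymbol{w}}^T\mathbf{X}_j\end{bmatrix}\right),\quad \tilde{\boldsymbol{w}}=\frac{\boldsymbol{\mu}}{\|\boldsymbol{\mu}\|},\quad \mathbf{S}=\begin{bmatrix}1&1\\-1&-1\\1&-1\\-1&1\end{bmatrix},\quad \boldsymbol{r}=R\begin{bmatrix}1\\1\\-1\\-1\end{bmatrix},$$ with an arbitrary scaling parameter $R>0$ (LeakyRelu applied entrywise). Then with probability at least $1-o(1)$ over the data, $\Psi$ separates intra-class edges from inter-class edges, i.e. $\operatorname{sign}(\Psi(\mathbf{X}_i,\mathbf{X}_j))=-\operatorname{sign}(\Psi(\mathbf{X}_k,\mathbf{X}_\ell))$ whenever $(i,j)\in E$ is an intra-class edge and $(k,\ell)\in E$ is an inter-class edge.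
   Context: CSBM: fix $n,d\in\mathbb{N}$, $\boldsymbol{\mu}\in\mathbb{R}^d$, $\sigma>0$, $p,q\in[0,1]$. Draw $\epsilon_1,\dots,\epsilon_n$ i.i.d. Bernoulli$(1/2)$ and set $C_k=\{j\in[n]:\epsilon_j=k\}$ for $k\in\{0,1\}$. Independently, $\mathbf{X}_i\sim N((2\epsilon_i-1)\boldsymbol{\mu},\sigma^2\mathbf{I})$, $\mathbf{X}_i\in\mathbb{R}^d$. The adjacency matrix $\mathbf{A}\in\{0,1\}^{n\times n}$ has independent entries $a_{ij}\sim\mathrm{Ber}(p)$ if $i,j$ lie in the same class and $a_{ij}\sim\mathrm{Ber}(q)$ otherwise; $E$ is the edge set of the graph $G=([n],E)$ with adjacency $\mathbf{A}$. An edge $(i,j)\in E$ is intra-class if $(i,j)\in C_0^2\cup C_1^2$ and inter-class otherwise. $\mathrm{LeakyRelu}(x)=x$ for $x\ge 0$ and $\beta x$ for $x<0$, for a fixed constant $\beta\in[0,1)$. Asymptotic notation refers to $n\to\infty$, with $p,q,\boldsymbol{\mu},\sigma,d$ allowed to depend on $n$. *)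

theory Defs
  imports "HOL-Probability.Probability" "HOL-Library.Landau_Symbols"
begin

text \<open>Vectors in R^d are represented as functions nat => real, only indices k < d matter.
 Class labels: eps i = True means class C_1, False means C_0.\<close>

definition leaky_relu :: "real \<Rightarrow> real \<Rightarrow> real" where
  "leaky_relu \<beta> x = (if x \<ge> 0 then x else \<beta> * x)"

definition vnorm :: "nat \<Rightarrow> (nat \<Rightarrow> real) \<Rightarrow> real" where
  "vnorm d v = sqrt (\<Sum>k<d. (v k)\<^sup>2)"

definition vinner :: "nat \<Rightarrow> (nat \<Rightarrow> real) \<Rightarrow> (nat \<Rightarrow> real) \<Rightarrow> real" where
  "vinner d u v = (\<Sum>k<d. u k * v k)"

definition mlp_att :: "real \<Rightarrow> real \<Rightarrow> nat \<Rightarrow> (nat \<Rightarrow> real) \<Rightarrow> (nat \<Rightarrow> real) \<Rightarrow> (nat \<Rightarrow> real) \<Rightarrow> real" where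
  "mlp_att \<beta> R d mu xi xj =
     (let w = (\<lambda>k. mu k / vnorm d mu);
          a = vinner d w xi; b = vinner d w xj;
          h = (\<lambda>i::nat. if i = 0 then a + b else if i = 1 then - a - b
                        else if i = 2 then a - b else b - a);
          r = (\<lambda>i::nat. if i = 0 then R else if i = 1 then R else if i = 2 then - R else - R)
      in (\<Sum>i<4. r i * leaky_relu \<beta> (h i)))"

definition labels_pmf :: "nat \<Rightarrow> (nat \<Rightarrow> bool) pmf" where
  "labels_pmf n = Pi_pmf {..<n} False (\<lambda>_. bernoulli_pmf (1/2))"

definition adj_pmf :: "nat \<Rightarrow> real \<Rightarrow> real \<Rightarrow> (nat \<Rightarrow> bool) \<Rightarrow> (nat \<times> nat \<Rightarrow> bool) pmf" where
  "adj_pmf n p q eps = Pi_pmf ({..<n} \<times> {..<n}) False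
     (\<lambda>(i,j). bernoulli_pmf (if eps i = eps j then p else q))"

definition graph_pmf :: "nat \<Rightarrow> real \<Rightarrow> real \<Rightarrow> ((nat \<Rightarrow> bool) \<times> (nat \<times> nat \<Rightarrow> bool)) pmf" where
  "graph_pmf n p q = bind_pmf (labels_pmf n) (\<lambda>eps. map_pmf (\<lambda>A. (eps, A)) (adj_pmf n p q eps))"

definition feat_measure :: "nat \<Rightarrow> nat \<Rightarrow> (nat \<Rightarrow> real) \<Rightarrow> real \<Rightarrow> (nat \<Rightarrow> bool) \<Rightarrow> (nat \<Rightarrow> nat \<Rightarrow> real) measure" where
  "feat_measure n d mu \<sigma> eps = PiM {..<n} (\<lambda>i. PiM {..<d} (\<lambda>k.
      density lborel (normal_density ((if eps i then 1 else -1) * mu k) \<sigma>)))"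

definition separates :: "nat \<Rightarrow> ((nat \<Rightarrow> real) \<Rightarrow> (nat \<Rightarrow> real) \<Rightarrow> real) \<Rightarrow> (nat \<Rightarrow> bool) \<Rightarrow> (nat \<times> nat \<Rightarrow> bool) \<Rightarrow> (nat \<Rightarrow> nat \<Rightarrow> real) \<Rightarrow> bool" where
  "separates n \<Psi> eps A X =
     (\<forall>i<n. \<forall>j<n. \<forall>k<n. \<forall>l<n.
        A (i,j) \<and> eps i = eps j \<and> A (k,l) \<and> eps k \<noteq> eps l \<longrightarrow>
          sgn (\<Psi> (X i) (X j)) = - sgn (\<Psi> (X k) (X l)))"

definition sep_prob :: "nat \<Rightarrow> nat \<Rightarrow> (nat \<Rightarrow> real) \<Rightarrow> real \<Rightarrow> real \<Rightarrow> real \<Rightarrow>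
     ((nat \<Rightarrow> real) \<Rightarrow> (nat \<Rightarrow> real) \<Rightarrow> real) \<Rightarrow> real" where
  "sep_prob n d mu \<sigma> p q \<Psi> =
     measure_pmf.expectation (graph_pmf n p q)
       (\<lambda>(eps, A). measure (feat_measure n d mu \<sigma> eps)
          {X \<in> space (feat_measure n d mu \<sigma> eps). separates n \<Psi> eps A X})"

end

theory Submission
  imports Defs
begin

text \<open>Since \<open>LeakyRelu x + LeakyRelu (-x) = (1 - \<beta>) |x|\<close>, the attention score is
  \<open>\<Psi>(x, y) = R (1 - \<beta>) (|a + b| - |a - b|)\<close> with \<open>a, b\<close> the projections of \<open>x, y\<close> on
  \<open>\<mu> / \<parallel>\<mu>\<parallel>\<close>, so its sign is \<open>sgn a * sgn b\<close>. Hence \<open>\<Psi>\<close> separates the edges of any graph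
  as soon as the projection of every node has the sign of its class. Each projection is
  \<open>N(\<plusminus>\<parallel>\<mu>\<parallel>, \<sigma>\<^sup>2)\<close>; Markov's inequality for the \<open>2k\<close>-th central moment with \<open>k \<approx> 2 ln n\<close>
  bounds the probability of a wrong sign by \<open>1/n\<^sup>2\<close> once \<open>\<parallel>\<mu>\<parallel> \<ge> 3 \<sigma> \<surd>(ln n)\<close>, and a
  union bound over the \<open>n\<close> nodes leaves a failure probability of at most \<open>1/n\<close>.
  The bound holds for every graph.\<close>

definition proj_dir :: "nat \<Rightarrow> (nat \<Rightarrow> real) \<Rightarrow> (nat \<Rightarrow> real) \<Rightarrow> real" where
  "proj_dir d mu x = vinner d (\<lambda>k. mu k / vnorm d mu) x"

lemma vnorm_nonneg: "0 \<le> vnorm d v"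
  by (simp add: vnorm_def sum_nonneg)

lemma vinner_self: "vinner d v v = (vnorm d v)\<^sup>2"
  by (simp add: vinner_def vnorm_def sum_nonneg power2_eq_square)

lemma vinner_scale_left: "vinner d (\<lambda>k. c * u k) v = c * vinner d u v"
  by (simp add: vinner_def sum_distrib_left mult.assoc)

lemma vinner_scale_right: "vinner d u (\<lambda>k. c * v k) = c * vinner d u v"
  by (simp add: vinner_def sum_distrib_left mult.left_commute)

lemma vnorm_scale: "vnorm d (\<lambda>k. c * v k) = \<bar>c\<bar> * vnorm d v"
  by (simp add: vnorm_def power_mult_distrib real_sqrt_mult flip: sum_distrib_left)

lemma proj_dir_eq: "proj_dir d mu x = vinner d mu x / vnorm d mu"
  by (simp add: proj_dir_def vinner_def sum_divide_distrib)

subsection \<open>Linear functionals of independent Gaussians\<close>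

lemma indep_vars_PiM_components:
  assumes prob: "\<And>k. k \<in> J \<Longrightarrow> prob_space (D k)"
    and sets: "\<And>k. k \<in> J \<Longrightarrow> sets (D k) = sets (M' k)" and "J \<noteq> {}"
  shows "prob_space.indep_vars (PiM J D) M' (\<lambda>k x. x k) J"
proof -
  interpret prob_space "PiM J D" by (rule prob_space_PiM) (rule prob)
  have rv: "random_variable (M' k) (\<lambda>x. x k)" if "k \<in> J" for k
    using measurable_component_singleton[OF that, of D] measurable_cong_sets[OF refl sets[OF that], of "PiM J D"]
    by simp
  have "distr (PiM J D) (PiM J M') (\<lambda>x. \<lambda>k\<in>J. x k) = distr (PiM J D) (PiM J D) (\<lambda>x. x)"
    by (rule distr_cong) (auto simp: sets space_PiM intro!: sets_PiM_cong)
  also have "\<dots> = PiM J (\<lambda>k. distr (PiM J D) (M' k) (\<lambda>x. x k))"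
  proof (simp, rule PiM_cong)
    fix k assume k: "k \<in> J"
    have "distr (PiM J D) (M' k) (\<lambda>x. x k) = distr (PiM J D) (D k) (\<lambda>x. x k)"
      by (rule distr_cong) (auto simp: sets k)
    also have "\<dots> = D k" by (rule distr_PiM_component[OF prob k])
    finally show "D k = distr (PiM J D) (M' k) (\<lambda>x. x k)" by simp
  qed simp
  finally show ?thesis
    by (subst indep_vars_iff_distr_eq_PiM'[OF \<open>J \<noteq> {}\<close> rv])
qed

lemma distributed_vinner_normal:
  fixes c m :: "nat \<Rightarrow> real" and \<sigma> :: real
  assumes \<sigma>: "\<sigma> > 0" and c: "vnorm d c = 1"
  shows "distributed (PiM {..<d} (\<lambda>k. density lborel (normal_density (m k) \<sigma>))) lborel
           (vinner d c) (normal_density (vinner d c m) \<sigma>)"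
proof -
  define D where "D = (\<lambda>k. density lborel (normal_density (m k) \<sigma>))"
  define I where "I = {k \<in> {..<d}. c k \<noteq> 0}"
  have prob_D: "prob_space (D k)" for k unfolding D_def by (rule prob_space_normal_density[OF \<sigma>])
  have component: "distributed (PiM {..<d} D) lborel (\<lambda>x. x k) (normal_density (m k) \<sigma>)"
    if "k < d" for k
    unfolding distributed_def
  proof (intro conjI)
    have "distr (PiM {..<d} D) lborel (\<lambda>x. x k) = distr (PiM {..<d} D) (D k) (\<lambda>x. x k)"
      by (rule distr_cong) (simp_all add: D_def)
    also have "\<dots> = D k"
      using that by (intro distr_PiM_component[OF prob_D]) auto
    finally show "distr (PiM {..<d} D) lborel (\<lambda>x. x k) = density lborel (normal_density (m k) \<sigma>)"
      unfolding D_def .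
    show "(\<lambda>x. x k) \<in> measurable (PiM {..<d} D) lborel"
      unfolding D_def by measurable (use that in simp)
  qed simp
  interpret P: prob_space "PiM {..<d} D" by (rule prob_space_PiM) (rule prob_D)
  \<comment> \<open>\<open>sum_indep_normal\<close> needs positive standard deviations, so coordinates with \<open>c k = 0\<close>
    are dropped; the summands are written \<open>0 + c k * x k\<close> to match \<open>normal_density_affine\<close>.\<close>
  have sum_I: "(\<Sum>k\<in>I. f k) = (\<Sum>k<d. f k)" if "\<And>k. c k = 0 \<Longrightarrow> f k = 0" for f :: "nat \<Rightarrow> real"
    using that by (intro sum.mono_neutral_left) (auto simp: I_def)
  have c2: "(\<Sum>k\<in>I. (c k)\<^sup>2) = 1"
    using c by (subst sum_I) (auto simp: vnorm_def)
  then have "I \<noteq> {}" by auto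
  then have "{..<d} \<noteq> {}" by (auto simp: I_def)
  have "P.indep_vars (\<lambda>_. borel) (\<lambda>k x. x k) {..<d}"
    using \<open>{..<d} \<noteq> {}\<close> by (intro indep_vars_PiM_components prob_D) (simp add: D_def)
  then have "P.indep_vars (\<lambda>_. borel) (\<lambda>k x. x k) I"
    by (rule P.indep_vars_subset) (auto simp: I_def)
  then have indep: "P.indep_vars (\<lambda>_. borel) (\<lambda>k x. 0 + c k * x k) I"
    by (rule P.indep_vars_compose2) simp
  have "distributed (PiM {..<d} D) lborel (\<lambda>x. \<Sum>k\<in>I. 0 + c k * x k)
     (normal_density (\<Sum>k\<in>I. 0 + c k * m k) (sqrt (\<Sum>k\<in>I. (\<bar>c k\<bar> * \<sigma>)\<^sup>2)))"
  proof (rule P.sum_indep_normal[OF _ \<open>I \<noteq> {}\<close> indep])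
    fix k assume "k \<in> I"
    then show "distributed (PiM {..<d} D) lborel (\<lambda>x. 0 + c k * x k)
        (normal_density (0 + c k * m k) (\<bar>c k\<bar> * \<sigma>))"
      using \<sigma> by (intro P.normal_density_affine component) (auto simp: I_def)
    show "0 < \<bar>c k\<bar> * \<sigma>" using \<open>k \<in> I\<close> \<sigma> by (simp add: I_def)
  qed (simp add: I_def)
  moreover have "(\<lambda>x. \<Sum>k\<in>I. 0 + c k * x k) = vinner d c"
    by (auto simp: vinner_def sum_I)
  moreover have "(\<Sum>k\<in>I. 0 + c k * m k) = vinner d c m"
    by (simp add: vinner_def sum_I)
  moreover have "(\<Sum>k\<in>I. (\<bar>c k\<bar> * \<sigma>)\<^sup>2) = \<sigma>\<^sup>2"
    using c2 by (simp add: power_mult_distrib flip: sum_distrib_right)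
  ultimately show ?thesis using \<sigma> by (simp add: D_def)
qed

lemma fact_double_div_fact_le: "fact (2 * k) / fact k \<le> (real (2 * k)) ^ k"
proof -
  have "fact k dvd (fact (2 * k) :: nat)" by (rule fact_dvd) simp
  then have "fact (2 * k) / fact k = real (fact (2 * k) div fact k)"
    by (simp add: real_of_nat_div)
  also have "\<dots> \<le> real ((2 * k) ^ k)"
    using fact_div_fact_le_pow[of k "2 * k"] by (simp only: of_nat_le_iff) simp
  finally show ?thesis by simp
qed

lemma measure_normal_tail_le:
  fixes m a :: real and k :: nat
  assumes \<sigma>: "\<sigma> > 0" and a: "a > 0"
  shows "measure (density lborel (normal_density m \<sigma>)) {y. a \<le> \<bar>y - m\<bar>} \<le> (\<sigma>\<^sup>2 * k / a\<^sup>2) ^ k"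
proof -
  define D where "D = density lborel (normal_density m \<sigma>)"
  define u where "u = (\<lambda>y::real. (y - m) ^ (2 * k))"
  interpret D: prob_space D unfolding D_def by (rule prob_space_normal_density[OF \<sigma>])
  have moment: "has_bochner_integral lborel (\<lambda>y. normal_density m \<sigma> y * u y)
      (fact (2 * k) / ((2 / \<sigma>\<^sup>2) ^ k * fact k))"
    unfolding u_def by (rule normal_moment_even[OF \<sigma>])
  have int: "integrable D u"
    unfolding D_def using moment by (subst integrable_density) (auto simp: u_def has_bochner_integral_iff)
  have "integral\<^sup>L D u = fact (2 * k) / fact k * (\<sigma>\<^sup>2 / 2) ^ k"
    unfolding D_def using moment \<sigma>
    by (subst integral_density) (auto simp: u_def has_bochner_integral_iff power_divide)
  also have "\<dots> \<le> real (2 * k) ^ k * (\<sigma>\<^sup>2 / 2) ^ k"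
    by (intro mult_right_mono fact_double_div_fact_le) simp
  also have "\<dots> = (\<sigma>\<^sup>2 * k) ^ k"
  proof -
    have "real (2 * k) * (\<sigma>\<^sup>2 / 2) = \<sigma>\<^sup>2 * k" by simp
    then show ?thesis by (metis power_mult_distrib)
  qed
  finally have moment_le: "integral\<^sup>L D u \<le> (\<sigma>\<^sup>2 * k) ^ k" .
  have "{y. a \<le> \<bar>y - m\<bar>} \<subseteq> {y \<in> space D. a ^ (2 * k) \<le> u y}"
  proof safe
    fix y assume "a \<le> \<bar>y - m\<bar>"
    then have "a ^ (2 * k) \<le> \<bar>y - m\<bar> ^ (2 * k)" using a by (intro power_mono) auto
    then show "a ^ (2 * k) \<le> u y" by (simp add: u_def power_even_abs)
  qed (simp add: D_def)
  then have "measure D {y. a \<le> \<bar>y - m\<bar>} \<le> measure D {y \<in> space D. a ^ (2 * k) \<le> u y}"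
    by (rule D.finite_measure_mono) (simp add: D_def u_def)
  also have "\<dots> \<le> integral\<^sup>L D u / a ^ (2 * k)"
    using int a
    by (intro integral_Markov_inequality_measure[where A="{}"]) (auto simp: u_def power_mult zero_le_power2)
  also have "\<dots> \<le> (\<sigma>\<^sup>2 * k) ^ k / a ^ (2 * k)"
    using moment_le a by (intro divide_right_mono) auto
  also have "\<dots> = (\<sigma>\<^sup>2 * k / a\<^sup>2) ^ k"
    by (simp only: power_divide power_mult)
  finally show ?thesis unfolding D_def .
qed

lemma (in prob_space) prob_normal_nonpos_le:
  assumes Y: "distributed M lborel Y (normal_density \<mu> \<sigma>)" and "\<sigma> > 0" "\<mu> > 0"
  shows "prob {x \<in> space M. Y x \<le> 0} \<le> (\<sigma>\<^sup>2 * k / \<mu>\<^sup>2) ^ k"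
proof -
  define S where "S = {y::real. \<mu> \<le> \<bar>y - \<mu>\<bar>}"
  have Y_meas: "Y \<in> measurable M lborel" using Y by (rule distributed_measurable)
  have S_sets: "S \<in> sets lborel" unfolding S_def by measurable
  have "prob {x \<in> space M. Y x \<le> 0} \<le> prob (Y -` S \<inter> space M)"
    using \<open>\<mu> > 0\<close> measurable_sets[OF Y_meas S_sets]
    by (intro finite_measure_mono) (auto simp: S_def)
  also have "\<dots> = measure (distr M lborel Y) S"
    using Y_meas S_sets by (simp add: measure_distr)
  also have "\<dots> = measure (density lborel (normal_density \<mu> \<sigma>)) S"
    using Y by (simp add: distributed_distr_eq_density)
  also have "\<dots> \<le> (\<sigma>\<^sup>2 * k / \<mu>\<^sup>2) ^ k"
    unfolding S_def using assms by (intro measure_normal_tail_le)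
  finally show ?thesis .
qed

lemma prob_vinner_nonpos_le:
  fixes c m :: "nat \<Rightarrow> real"
  assumes "\<sigma> > 0" "vnorm d c = 1" "vinner d c m > 0"
  shows "measure (PiM {..<d} (\<lambda>k. density lborel (normal_density (m k) \<sigma>)))
           {x \<in> space (PiM {..<d} (\<lambda>k. density lborel (normal_density (m k) \<sigma>))). vinner d c x \<le> 0}
         \<le> (\<sigma>\<^sup>2 * k / (vinner d c m)\<^sup>2) ^ k"
proof -
  interpret prob_space "PiM {..<d} (\<lambda>k. density lborel (normal_density (m k) \<sigma>))"
    by (intro prob_space_PiM prob_space_normal_density assms(1))
  show ?thesis
    using assms by (intro prob_normal_nonpos_le distributed_vinner_normal)
qed

subsection \<open>The sign of the attention score\<close>

lemma leaky_relu_add_neg: "leaky_relu \<beta> x + leaky_relu \<beta> (- x) = (1 - \<beta>) * \<bar>x\<bar>"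
  by (auto simp: leaky_relu_def algebra_simps)

lemma mlp_att_eq:
  "mlp_att \<beta> R d mu x y = R * (1 - \<beta>) *
     (\<bar>proj_dir d mu x + proj_dir d mu y\<bar> - \<bar>proj_dir d mu x - proj_dir d mu y\<bar>)"
proof -
  define a b where "a = proj_dir d mu x" and "b = proj_dir d mu y"
  have "mlp_att \<beta> R d mu x y = R * (leaky_relu \<beta> (a + b) + leaky_relu \<beta> (- (a + b)))
      - R * (leaky_relu \<beta> (a - b) + leaky_relu \<beta> (- (a - b)))"
    unfolding mlp_att_def Let_def a_def b_def proj_dir_def
    by (simp add: numeral_eq_Suc lessThan_Suc algebra_simps)
  also have "\<dots> = R * (1 - \<beta>) * (\<bar>a + b\<bar> - \<bar>a - b\<bar>)"
    unfolding leaky_relu_add_neg by (simp add: algebra_simps)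
  finally show ?thesis unfolding a_def b_def .
qed

lemma sgn_abs_add_minus_abs_diff:
  fixes a b :: real
  shows "sgn (\<bar>a + b\<bar> - \<bar>a - b\<bar>) = sgn a * sgn b"
  by (auto simp: sgn_real_def abs_if)

lemma sgn_mlp_att:
  assumes "R > 0" "\<beta> < 1"
  shows "sgn (mlp_att \<beta> R d mu x y) = sgn (proj_dir d mu x) * sgn (proj_dir d mu y)"
  using assms by (simp add: mlp_att_eq sgn_mult sgn_abs_add_minus_abs_diff)

lemma separates_mlp_att:
  assumes "R > 0" "\<beta> < 1"
    and correct: "\<And>i. i < n \<Longrightarrow> 0 < (if eps i then 1 else -1) * proj_dir d mu (X i)"
  shows "separates n (mlp_att \<beta> R d mu) eps A X"
proof -
  have "sgn (proj_dir d mu (X i)) = (if eps i then 1 else -1)" if "i < n" for i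
    using correct[OF that] by (auto simp: zero_less_mult_iff split: if_splits)
  then show ?thesis
    using assms(1,2) unfolding separates_def by (auto simp: sgn_mlp_att)
qed

subsection \<open>Probability of separation\<close>

lemma sets_separates:
  assumes meas: "\<And>i j. i < n \<Longrightarrow> j < n \<Longrightarrow> (\<lambda>X. \<Psi> (X i) (X j)) \<in> borel_measurable M"
  shows "{X \<in> space M. separates n \<Psi> eps A X} \<in> sets M"
proof -
  have sign_eq: "Measurable.pred M (\<lambda>X. sgn (\<Psi> (X i) (X j)) = - sgn (\<Psi> (X k) (X l)))"
    if "i < n" "j < n" "k < n" "l < n" for i j k l
    unfolding pred_def using meas[OF that(1,2)] meas[OF that(3,4)]
    by (intro measurable_equality_set borel_measurable_uminus; measurable)
  show ?thesis
    unfolding separates_def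
    by (intro predE pred_intros_countable pred_intros_imp' sign_eq) auto
qed

lemma prob_space_feat_measure: "\<sigma> > 0 \<Longrightarrow> prob_space (feat_measure n d mu \<sigma> eps)"
  unfolding feat_measure_def by (intro prob_space_PiM prob_space_normal_density)

lemma measurable_feat_component:
  assumes "i < n"
  shows "(\<lambda>X. X i) \<in> feat_measure n d mu \<sigma> eps \<rightarrow>\<^sub>M
    PiM {..<d} (\<lambda>k. density lborel (normal_density ((if eps i then 1 else -1) * mu k) \<sigma>))"
  unfolding feat_measure_def by (rule measurable_component_singleton) (simp add: assms)

lemma distr_feat_component:
  assumes "\<sigma> > 0" "i < n"
  shows "distr (feat_measure n d mu \<sigma> eps)
      (PiM {..<d} (\<lambda>k. density lborel (normal_density ((if eps i then 1 else -1) * mu k) \<sigma>)))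
      (\<lambda>X. X i)
    = PiM {..<d} (\<lambda>k. density lborel (normal_density ((if eps i then 1 else -1) * mu k) \<sigma>))"
  unfolding feat_measure_def using assms
  by (intro distr_PiM_component prob_space_PiM prob_space_normal_density) auto

lemma borel_measurable_proj_dir_feat:
  assumes "i < n"
  shows "(\<lambda>X. proj_dir d mu (X i)) \<in> borel_measurable (feat_measure n d mu \<sigma> eps)"
proof -
  have "proj_dir d mu \<in> borel_measurable
      (PiM {..<d} (\<lambda>k. density lborel (normal_density ((if eps i then 1 else -1) * mu k) \<sigma>)))"
    unfolding proj_dir_def vinner_def by measurable
  then show ?thesis by (rule measurable_compose[OF measurable_feat_component[OF assms]])
qed

lemma prob_wrong_sign_le:
  assumes "\<sigma> > 0" "vnorm d mu > 0" "i < n"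
  shows "measure (feat_measure n d mu \<sigma> eps)
      {X \<in> space (feat_measure n d mu \<sigma> eps). (if eps i then 1 else -1) * proj_dir d mu (X i) \<le> 0}
    \<le> (\<sigma>\<^sup>2 * k / (vnorm d mu)\<^sup>2) ^ k"
proof -
  define s :: real where "s = (if eps i then 1 else -1)"
  define M where "M = feat_measure n d mu \<sigma> eps"
  define Mi where "Mi = PiM {..<d} (\<lambda>k. density lborel (normal_density (s * mu k) \<sigma>))"
  define c where "c = (\<lambda>k. s / vnorm d mu * mu k)"
  define wrong where "wrong = {x \<in> space Mi. vinner d c x \<le> 0}"
  have component: "(\<lambda>X. X i) \<in> M \<rightarrow>\<^sub>M Mi"
    unfolding M_def Mi_def s_def by (rule measurable_feat_component[OF assms(3)])
  have c_unit: "vnorm d c = 1"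
    unfolding c_def vnorm_scale using assms(2) by (simp add: s_def)
  have c_mean: "vinner d c (\<lambda>k. s * mu k) = vnorm d mu"
    unfolding c_def vinner_scale_left vinner_scale_right vinner_self
    using assms(2) by (simp add: s_def power2_eq_square)
  have c_proj: "vinner d c x = s * proj_dir d mu x" for x
    unfolding c_def vinner_scale_left proj_dir_eq by simp
  have "wrong \<in> sets Mi"
    unfolding wrong_def Mi_def vinner_def by measurable
  moreover have "{X \<in> space M. s * proj_dir d mu (X i) \<le> 0} = (\<lambda>X. X i) -` wrong \<inter> space M"
    using measurable_space[OF component] by (auto simp: wrong_def c_proj)
  ultimately have "measure M {X \<in> space M. s * proj_dir d mu (X i) \<le> 0} = measure (distr M Mi (\<lambda>X. X i)) wrong"
    by (simp add: measure_distr[OF component])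
  also have "distr M Mi (\<lambda>X. X i) = Mi"
    unfolding M_def Mi_def s_def by (rule distr_feat_component[OF assms(1,3)])
  also have "measure Mi wrong \<le> (\<sigma>\<^sup>2 * k / (vinner d c (\<lambda>k. s * mu k))\<^sup>2) ^ k"
    unfolding Mi_def wrong_def using assms(1,2) c_unit c_mean by (intro prob_vinner_nonpos_le) auto
  also have "\<dots> = (\<sigma>\<^sup>2 * k / (vnorm d mu)\<^sup>2) ^ k" by (simp only: c_mean)
  finally show ?thesis unfolding M_def s_def .
qed

lemma prob_separates_ge:
  assumes "\<beta> < 1" "R > 0" "\<sigma> > 0" "vnorm d mu > 0"
  shows "1 - real n * (\<sigma>\<^sup>2 * k / (vnorm d mu)\<^sup>2) ^ k \<le> measure (feat_measure n d mu \<sigma> eps)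
     {X \<in> space (feat_measure n d mu \<sigma> eps). separates n (mlp_att \<beta> R d mu) eps A X}"
proof -
  define M where "M = feat_measure n d mu \<sigma> eps"
  define \<delta> where "\<delta> = (\<sigma>\<^sup>2 * k / (vnorm d mu)\<^sup>2) ^ k"
  define wrong where
    "wrong = (\<lambda>i. {X \<in> space M. (if eps i then 1 else -1) * proj_dir d mu (X i) \<le> 0})"
  interpret prob_space M unfolding M_def by (rule prob_space_feat_measure[OF assms(3)])
  have proj_meas: "(\<lambda>X. proj_dir d mu (X i)) \<in> borel_measurable M" if "i < n" for i
    unfolding M_def by (rule borel_measurable_proj_dir_feat[OF that])
  have wrong_sets: "wrong i \<in> events" if "i < n" for i
    unfolding wrong_def using proj_meas[OF that] by measurable
  then have "(\<Union>i<n. wrong i) \<in> events" by auto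
  have "prob (\<Union>i<n. wrong i) \<le> (\<Sum>i<n. prob (wrong i))"
    using wrong_sets by (intro finite_measure_subadditive_finite) auto
  also have "\<dots> \<le> (\<Sum>i<n. \<delta>)"
    using assms(3,4)
    by (intro sum_mono) (simp add: wrong_def M_def \<delta>_def prob_wrong_sign_le)
  finally have "1 - real n * \<delta> \<le> prob (space M - (\<Union>i<n. wrong i))"
    by (simp add: prob_compl[OF \<open>(\<Union>i<n. wrong i) \<in> events\<close>])
  also have "\<dots> \<le> prob {X \<in> space M. separates n (mlp_att \<beta> R d mu) eps A X}"
  proof (rule finite_measure_mono)
    show "space M - (\<Union>i<n. wrong i) \<subseteq> {X \<in> space M. separates n (mlp_att \<beta> R d mu) eps A X}"
      using assms(1,2) by (auto simp: wrong_def not_le intro: separates_mlp_att)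
    show "{X \<in> space M. separates n (mlp_att \<beta> R d mu) eps A X} \<in> events"
    proof (rule sets_separates)
      fix i j assume "i < n" "j < n"
      then show "(\<lambda>X. mlp_att \<beta> R d mu (X i) (X j)) \<in> borel_measurable M"
        unfolding mlp_att_eq using proj_meas[of i] proj_meas[of j] by measurable
    qed
  qed
  finally show ?thesis unfolding M_def \<delta>_def .
qed

lemma sep_prob_bounds:
  assumes "\<sigma> > 0"
    and sep: "\<And>eps A. c \<le> measure (feat_measure n d mu \<sigma> eps)
      {X \<in> space (feat_measure n d mu \<sigma> eps). separates n \<Psi> eps A X}"
  shows "c \<le> sep_prob n d mu \<sigma> p q \<Psi> \<and> sep_prob n d mu \<sigma> p q \<Psi> \<le> 1"
proof -
  define f where "f = (\<lambda>(eps, A). measure (feat_measure n d mu \<sigma> eps)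
      {X \<in> space (feat_measure n d mu \<sigma> eps). separates n \<Psi> eps A X})"
  have f_le: "f x \<le> 1" for x
  proof (cases x)
    case (Pair eps A)
    interpret prob_space "feat_measure n d mu \<sigma> eps"
      by (rule prob_space_feat_measure[OF assms(1)])
    show ?thesis by (simp add: f_def Pair)
  qed
  have int: "integrable (graph_pmf n p q) f"
    using f_le by (intro measure_pmf.integrable_const_bound[where B=1]) (auto simp: f_def)
  have "c \<le> measure_pmf.expectation (graph_pmf n p q) f"
    using sep by (intro measure_pmf.integral_ge_const int) (auto simp: f_def)
  moreover have "measure_pmf.expectation (graph_pmf n p q) f \<le> 1"
    using f_le by (intro measure_pmf.integral_le_const int) auto
  ultimately show ?thesis unfolding sep_prob_def f_def by simp
qed

lemma n_mult_moment_bound_le_inverse: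
  fixes \<sigma> N :: real and n :: nat
  assumes n: "n \<ge> 3" and \<sigma>: "\<sigma> > 0" and N: "3 * (\<sigma> * sqrt (ln n)) \<le> N"
  shows "real n * (\<sigma>\<^sup>2 * nat \<lceil>2 * ln n\<rceil> / N\<^sup>2) ^ nat \<lceil>2 * ln n\<rceil> \<le> 1 / real n"
proof -
  define L where "L = ln (real n)"
  define k where "k = nat \<lceil>2 * L\<rceil>"
  have "exp 1 \<le> real n" using exp_le n by linarith
  then have L1: "1 \<le> L" unfolding L_def using n by (subst ln_ge_iff) auto
  have "0 < \<sigma> * sqrt L" using \<sigma> L1 by simp
  then have N_pos: "0 < N" using N unfolding L_def by simp
  have "(3 * (\<sigma> * sqrt L))\<^sup>2 \<le> N\<^sup>2"
    using N \<open>0 < \<sigma> * sqrt L\<close> unfolding L_def by (intro power_mono) auto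
  then have var_le: "9 * (\<sigma>\<^sup>2 * L) \<le> N\<^sup>2" using L1 by (simp add: power_mult_distrib)
  have k_ge: "2 * L \<le> real k" and k_le: "real k \<le> 3 * L"
    unfolding k_def using L1 by linarith+
  have "\<sigma>\<^sup>2 * k / N\<^sup>2 \<le> \<sigma>\<^sup>2 * (3 * L) / N\<^sup>2"
    using k_le by (intro divide_right_mono mult_left_mono) auto
  also have "\<dots> \<le> 1 / 3" using var_le N_pos by (simp add: field_simps)
  also have "\<dots> \<le> 1 / exp 1" using exp_le by (intro divide_left_mono) auto
  also have "\<dots> = exp (-1)" by (simp add: exp_minus inverse_eq_divide)
  finally have "(\<sigma>\<^sup>2 * k / N\<^sup>2) ^ k \<le> exp (-1) ^ k" by (intro power_mono) auto
  also have "\<dots> = exp (-1 * real k)" by (rule exp_of_nat2_mult[symmetric])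
  also have "\<dots> \<le> exp (- (2 * L))" using k_ge by simp
  also have "\<dots> = 1 / (real n)\<^sup>2"
  proof -
    have "exp (2 * L) = (real n)\<^sup>2"
      using n by (simp only: L_def mult_2 exp_add) (simp add: power2_eq_square)
    then show ?thesis by (simp add: exp_minus inverse_eq_divide)
  qed
  finally have "real n * (\<sigma>\<^sup>2 * k / N\<^sup>2) ^ k \<le> real n * (1 / (real n)\<^sup>2)"
    using n by (intro mult_left_mono) auto
  also have "\<dots> = 1 / real n" by (simp add: power2_eq_square)
  finally show ?thesis unfolding k_def L_def .
qed

lemma sep_prob_mlp_att_bounds:
  assumes "\<beta> < 1" "R > 0" "\<sigma> > 0" "n \<ge> 3" and mu_large: "3 * (\<sigma> * sqrt (ln n)) \<le> vnorm d mu"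
  shows "1 - 1 / real n \<le> sep_prob n d mu \<sigma> p q (mlp_att \<beta> R d mu)
    \<and> sep_prob n d mu \<sigma> p q (mlp_att \<beta> R d mu) \<le> 1"
proof (rule sep_prob_bounds[OF assms(3)])
  fix eps A
  have "0 < \<sigma> * sqrt (ln n)" using assms(3,4) by simp
  then have "vnorm d mu > 0" using mu_large by linarith
  then show "1 - 1 / real n \<le> measure (feat_measure n d mu \<sigma> eps)
      {X \<in> space (feat_measure n d mu \<sigma> eps). separates n (mlp_att \<beta> R d mu) eps A X}"
    using n_mult_moment_bound_le_inverse[OF assms(4,3) mu_large]
      prob_separates_ge[OF assms(1-3) \<open>vnorm d mu > 0\<close>, where n=n and k="nat \<lceil>2 * ln (real n)\<rceil>" and eps=eps and A=A]
    by linarith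
qed

theorem theorem3:
  fixes d :: "nat \<Rightarrow> nat" and mu :: "nat \<Rightarrow> nat \<Rightarrow> real"
    and \<sigma> p q R :: "nat \<Rightarrow> real" and \<beta> :: real
  assumes "0 \<le> \<beta>" "\<beta> < 1"
    and "\<And>n. \<sigma> n > 0"
    and "\<And>n. 0 \<le> p n \<and> p n \<le> 1" "\<And>n. 0 \<le> q n \<and> q n \<le> 1"
    and "\<And>n. R n > 0"
    and "(\<lambda>n. \<sigma> n * sqrt (ln (real n))) \<in> o(\<lambda>n. vnorm (d n) (mu n))"
  shows "(\<lambda>n. sep_prob n (d n) (mu n) (\<sigma> n) (p n) (q n)
            (mlp_att \<beta> (R n) (d n) (mu n))) \<longlonglongrightarrow> 1"
proof -
  define SP where "SP = (\<lambda>n. sep_prob n (d n) (mu n) (\<sigma> n) (p n) (q n) (mlp_att \<beta> (R n) (d n) (mu n)))"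
  have "\<forall>\<^sub>F n in sequentially. \<bar>\<sigma> n * sqrt (ln n)\<bar> \<le> 1 / 3 * \<bar>vnorm (d n) (mu n)\<bar>"
    using landau_o.smallD[OF assms(7), of "1 / 3"] by simp
  then have bounds: "\<forall>\<^sub>F n in sequentially. 1 - 1 / real n \<le> SP n \<and> SP n \<le> 1"
    using eventually_ge_at_top[of 3]
  proof eventually_elim
    case (elim n)
    have "0 \<le> \<sigma> n * sqrt (ln n)" using assms(3)[of n] elim(2) by simp
    with elim show ?case
      unfolding SP_def using assms(2,3,6) vnorm_nonneg by (intro sep_prob_mlp_att_bounds) auto
  qed
  have lower_lim: "(\<lambda>n. 1 - 1 / real n) \<longlonglongrightarrow> 1"
    using tendsto_diff[OF tendsto_const lim_1_over_n, of 1] by simp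
  have "SP \<longlonglongrightarrow> 1"
    by (rule tendsto_sandwich[OF _ _ lower_lim tendsto_const]) (use bounds in \<open>auto elim: eventually_mono\<close>)
  then show ?thesis unfolding SP_def .
qed

end
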